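(* For every base $\mathscr{B}$ and IPL formula $\varphi$: $\Vdash_{\mathscr{B}}\varphi$ if and only if for every base $\mathscr{X}\supseteq\mathscr{B}$ and every atom $p$, if $\varphi\Vdash_{\mathscr{X}}p$ then $\Vdash_{\mathscr{X}}p$.
   Context: Fix a denumerable set $\mathbb{A}$ of atoms. IPL formulas are built from atoms and $\bot$ using $\wedge,\vee,\to$. An atomic rule has the form $(Q_1\triangleright q_1,\dots,Q_n\triangleright q_n)\Rightarrow q$ with $n\ge 0$, $q,q_i\in\mathbb{A}$, $Q_i$ finite sets of atoms; a base is a set of atomic rules. Derivability $\vdash_{\mathscr{B}}$ is the least relation with $S\cup\{q\}\vdash_{\mathscr{B}} q$, and if $(Q_1\triangleright q_1,\dots,Q_n\triangleright q_n)\Rightarrow q\in\mathscr{B}$ and $S\cup Q_i\vdash_{\mathscr{B}} q_i$ for all $i$ then $S\vdash_{\mathscr{B}} q$. Sandqvist's support $\Vdash_{\mathscr{B}}$: $\Vdash_{\mathscr{B}}p$ iff $\emptyset\vdash_{\mathscr{B}}p$; $\Vdash_{\mathscr{B}}\varphi\to\psi$ iff $\varphi\Vdash_{\mathscr{B}}\psi$; $\Vdash_{\mathscr{B}}\varphi\wedge\psi$ iff $\Vdash_{\mathscr{B}}\varphi$ and $\Vdash_{\mathscr{B}}\psi$; $\Vdash_{\mathscr{B}}\varphi\vee\psi$ iff for all $\mathscr{C}\supseteq\mathscr{B}$ and atoms $p$, if $\varphi\Vdash_{\mathscr{C}}p$ and $\psi\Vdash_{\mathscr{C}}p$ then $\Vdash_{\mathscr{C}}p$;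 $\Vdash_{\mathscr{B}}\bot$ iff $\Vdash_{\mathscr{B}}p$ for all atoms $p$; for nonempty finite $\Gamma$, $\Gamma\Vdash_{\mathscr{B}}\varphi$ iff for every $\mathscr{C}\supseteq\mathscr{B}$, if $\Vdash_{\mathscr{C}}\psi$ for all $\psi\in\Gamma$ then $\Vdash_{\mathscr{C}}\varphi$. *)

theory Defs
  imports Main "HOL-Library.FSet"
begin

type_synonym atom = nat

datatype form = Atom atom | Bot | Conj form form | Disj form form | Imp form form

text \<open>An atomic rule (Q1 |> q1, ..., Qn |> qn) => q: a finite list of premises,
  each a finite set of atoms Qi with an atom qi, and a conclusion q.\<close>
datatype rule = Rule "(atom fset \<times> atom) list" atom

type_synonym base = "rule set"

inductive derives :: "base \<Rightarrow> atom set \<Rightarrow> atom \<Rightarrow> bool" where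
  der_ax: "q \<in> S \<Longrightarrow> derives B S q"
| der_rule: "Rule prems q \<in> B \<Longrightarrow> (\<forall>(Q, qi) \<in> set prems. derives B (S \<union> fset Q) qi)
             \<Longrightarrow> derives B S q"

text \<open>Sandqvist's support. The clauses for implication and disjunction unfold the
  consequence relation phi |=_C psi (singleton context) inline.\<close>
fun supp :: "base \<Rightarrow> form \<Rightarrow> bool" where
  "supp B (Atom p) = derives B {} p"
| "supp B (Imp \<phi> \<psi>) = (\<forall>C. B \<subseteq> C \<longrightarrow> supp C \<phi> \<longrightarrow> supp C \<psi>)"
| "supp B (Conj \<phi> \<psi>) = (supp B \<phi> \<and> supp B \<psi>)"
| "supp B (Disj \<phi> \<psi>) = (\<forall>C p. B \<subseteq> C \<longrightarrow>
      (\<forall>D. C \<subseteq> D \<longrightarrow> supp D \<phi> \<longrightarrow> derives D {} p) \<longrightarrow>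
      (\<forall>D. C \<subseteq> D \<longrightarrow> supp D \<psi> \<longrightarrow> derives D {} p) \<longrightarrow>
      derives C {} p)"
| "supp B Bot = (\<forall>p. derives B {} p)"

definition supp_from :: "base \<Rightarrow> form set \<Rightarrow> form \<Rightarrow> bool" where
  "supp_from B \<Gamma> \<phi> = (\<forall>C. B \<subseteq> C \<longrightarrow> (\<forall>\<psi>\<in>\<Gamma>. supp C \<psi>) \<longrightarrow> supp C \<phi>)"

end

theory Submission
  imports Defs
begin

text \<open>Support is monotone in the base, which gives the forward direction. For the converse,
  call \<open>\<phi>\<close> atom-eliminable at \<open>B\<close> when every atom that \<open>\<phi>\<close> supports over an extension \<open>X\<close> of
  \<open>B\<close> is already supported over \<open>X\<close>. This property passes to whatever \<open>\<phi>\<close> entails over all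
  extensions of \<open>B\<close> -- a conjunct, or the consequent of an implication once its antecedent is
  supported -- so induction on \<open>\<phi>\<close> handles conjunction and implication; for a disjunction the
  property is literally Sandqvist's clause.\<close>

lemma derives_mono: "derives B S q \<Longrightarrow> B \<subseteq> C \<Longrightarrow> derives C S q"
proof (induction rule: derives.induct)
  case der_ax
  then show ?case by (simp add: derives.der_ax)
next
  case (der_rule prems q B S)
  then show ?case by (intro derives.der_rule[of prems q]) auto
qed

lemma supp_Imp_iff: "supp B (Imp \<phi> \<psi>) \<longleftrightarrow> supp_from B {\<phi>} \<psi>"
  by (simp add: supp_from_def)

lemma supp_Disj_iff:
  "supp B (Disj \<phi> \<psi>) \<longleftrightarrow>
    (\<forall>C p. B \<subseteq> C \<longrightarrow> supp_from C {\<phi>} (Atom p) \<longrightarrow> supp_from C {\<psi>} (Atom p) \<longrightarrow> supp C (Atom p))"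
  by (simp add: supp_from_def)

lemma supp_from_mono: "supp_from B \<Gamma> \<phi> \<Longrightarrow> B \<subseteq> C \<Longrightarrow> supp_from C \<Gamma> \<phi>"
  unfolding supp_from_def by (meson order_trans)

lemma supp_from_trans:
  assumes "supp_from B \<Gamma> \<psi>" and "supp_from B {\<psi>} \<chi>"
  shows "supp_from B \<Gamma> \<chi>"
  using assms unfolding supp_from_def by blast

lemma supp_mono: "supp B \<phi> \<Longrightarrow> B \<subseteq> C \<Longrightarrow> supp C \<phi>"
proof (induction \<phi> arbitrary: B C)
  case Atom
  then show ?case by (simp add: derives_mono)
next
  case Bot
  then show ?case using derives_mono by (simp, blast)
next
  case Conj
  then show ?case by auto
next
  case Disj
  then show ?case unfolding supp_Disj_iff by (meson order_trans)
next
  case Imp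
  then show ?case unfolding supp_Imp_iff using supp_from_mono by blast
qed

definition atom_eliminable :: "base \<Rightarrow> form \<Rightarrow> bool" where
  "atom_eliminable B \<phi> \<longleftrightarrow>
    (\<forall>X p. B \<subseteq> X \<longrightarrow> supp_from X {\<phi>} (Atom p) \<longrightarrow> supp X (Atom p))"

lemma atom_eliminable_if_entails:
  assumes "atom_eliminable B \<phi>" and "\<And>X. B \<subseteq> X \<Longrightarrow> supp_from X {\<phi>} \<psi>"
  shows "atom_eliminable B \<psi>"
  using assms supp_from_trans unfolding atom_eliminable_def by blast

lemma atom_eliminable_mono: "atom_eliminable B \<phi> \<Longrightarrow> B \<subseteq> C \<Longrightarrow> atom_eliminable C \<phi>"
  unfolding atom_eliminable_def by (meson order_trans)

lemma supp_imp_atom_eliminable: "supp B \<phi> \<Longrightarrow> atom_eliminable B \<phi>"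
  unfolding atom_eliminable_def supp_from_def using supp_mono by blast

lemma supp_from_Disj_Atom:
  assumes "supp_from C {\<phi>} (Atom p)" and "supp_from C {\<psi>} (Atom p)"
  shows "supp_from C {Disj \<phi> \<psi>} (Atom p)"
  unfolding supp_from_def
proof (intro allI impI)
  fix D assume "C \<subseteq> D" and "\<forall>\<chi>\<in>{Disj \<phi> \<psi>}. supp D \<chi>"
  then have "supp D (Disj \<phi> \<psi>)" by simp
  moreover have "supp_from D {\<phi>} (Atom p)" and "supp_from D {\<psi>} (Atom p)"
    using assms \<open>C \<subseteq> D\<close> by (simp_all add: supp_from_mono)
  ultimately show "supp D (Atom p)" unfolding supp_Disj_iff using order_refl by blast
qed

lemma supp_from_Imp_consequent:
  assumes "supp C \<phi>" and "C \<subseteq> X"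
  shows "supp_from X {Imp \<phi> \<psi>} \<psi>"
  unfolding supp_from_def
proof (intro allI impI)
  fix D assume "X \<subseteq> D" and "\<forall>\<chi>\<in>{Imp \<phi> \<psi>}. supp D \<chi>"
  then have "supp_from D {\<phi>} \<psi>" using supp_Imp_iff by blast
  moreover have "supp D \<phi>"
    using assms \<open>X \<subseteq> D\<close> by (meson order_trans supp_mono)
  ultimately show "supp D \<psi>" unfolding supp_from_def by blast
qed

lemma atom_eliminable_imp_supp: "atom_eliminable B \<phi> \<Longrightarrow> supp B \<phi>"
proof (induction \<phi> arbitrary: B)
  case Atom
  then show ?case by (auto simp: atom_eliminable_def supp_from_def)
next
  case Bot
  then show ?case by (auto simp: atom_eliminable_def supp_from_def)
next
  case (Conj \<phi> \<psi>)
  have "supp_from X {Conj \<phi> \<psi>} \<phi>" and "supp_from X {Conj \<phi> \<psi>} \<psi>" for X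
    by (simp_all add: supp_from_def)
  then have "atom_eliminable B \<phi>" and "atom_eliminable B \<psi>"
    using atom_eliminable_if_entails[OF Conj.prems] by blast+
  then show ?case using Conj.IH by simp
next
  case (Disj \<phi> \<psi>)
  show ?case unfolding supp_Disj_iff
  proof (intro allI impI)
    fix C p assume "B \<subseteq> C" and "supp_from C {\<phi>} (Atom p)" and "supp_from C {\<psi>} (Atom p)"
    then have "supp_from C {Disj \<phi> \<psi>} (Atom p)" by (simp add: supp_from_Disj_Atom)
    with Disj.prems \<open>B \<subseteq> C\<close> show "supp C (Atom p)" unfolding atom_eliminable_def by simp
  qed
next
  case (Imp \<phi> \<psi>)
  show ?case unfolding supp.simps
  proof (intro allI impI)
    fix C assume "B \<subseteq> C" and "supp C \<phi>"
    have "atom_eliminable C (Imp \<phi> \<psi>)"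
      using Imp.prems \<open>B \<subseteq> C\<close> by (rule atom_eliminable_mono)
    then have "atom_eliminable C \<psi>"
      using \<open>supp C \<phi>\<close> by (rule atom_eliminable_if_entails[OF _ supp_from_Imp_consequent])
    then show "supp C \<psi>" by (rule Imp.IH)
  qed
qed

theorem corollary1:
  fixes B :: base and \<phi> :: form
  shows "supp B \<phi> \<longleftrightarrow> (\<forall>X p. B \<subseteq> X \<longrightarrow> supp_from X {\<phi>} (Atom p) \<longrightarrow> supp X (Atom p))"
  using supp_imp_atom_eliminable atom_eliminable_imp_supp
  unfolding atom_eliminable_def by blast

end
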